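(* For $x\in X(l_1,\dots,l_n,l_\infty)$ let $g(x)$ be the greatest common divisor of the numbers $m_{a,b}(x)$ of arcs joining the pairs $\{a,b\}$ of marked points of $x$. Then $g(hx)=g(x)$ for every $h\in J_n$.
   Context: Cactus group: $J_n$ is the group generated by $s_{p,q}$, $1\le p<q\le n$, subject to the relations $s_{p,q}^2=e$; $s_{p,q}s_{p',q'}=s_{p',q'}s_{p,q}$ if $[p,q]$ and $[p',q']$ are disjoint; $s_{p,q}s_{p',q'}s_{p,q}=s_{p+q-q',p+q-p'}$ if $p\le p'<q'\le q$. Arc diagrams: fix nonnegative integers $l_1,\dots,l_n,l_\infty$. On the boundary circle of a closed disc place $n+1$ marked positions: position $0$ (occupied by $z_\infty$) and positions $1,\dots,n$ following it clockwise. An arc diagram is a bijective assignment of labels $z_1,\dots,z_n$ to positions $1,\dots,n$ together with a finite collection of simple arcs in the disc, pairwise disjoint except at endpoints, each joining two distinct marked points, such that $z_j$ is an endpoint of exactly $l_j$ arcs ($j\in\{1,\dots,n,\infty\}$; $l_j$ is the valence). Parallel arcs are allowed; diagrams are up to isotopy, equivalently determined by the labelling and the number of arcs between each pair of marked points. $X(l_1,\dots,l_n,l_\infty)$ is the set of such diagrams. Action: $s_{p,q}$ ($1\le p<q\le n$) acts by cutting off positions $p,\dots,q$ with a chord $\ell$ (arcs isotoped to cross $\ell$ at most once), reflecting that region by the reflection reversing $\ell$ (label at position $p+t$ goes to position $q-t$, crossing points on $\ell$ reversed), leaving the rest unchanged and reconnecting arcs at $\ell$. Words act right to left; this is an action of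 $J_n$. *)

theory Defs
  imports Main
begin

text \<open>Marked positions are 0,1,...,n in clockwise order, position 0 carries
  z_infinity. Labels are encoded as numbers: label 0 stands for z_infinity and label j
  (1 \<le> j \<le> n) for z_j. A diagram is a pair (lab, m): lab a is the label at position a,
  and m a b is the number of arcs joining positions a and b.
  The valences are given by l :: nat \<Rightarrow> nat with l 0 = l_infinity and l j = l_j.\<close>

type_synonym arc_diagram = "(nat \<Rightarrow> nat) \<times> (nat \<Rightarrow> nat \<Rightarrow> nat)"

definition arc_diagrams :: "nat \<Rightarrow> (nat \<Rightarrow> nat) \<Rightarrow> arc_diagram set" where
  "arc_diagrams n l = {(lab, m).
      lab 0 = 0 \<and> bij_betw lab {1..n} {1..n} \<and> (\<forall>a>n. lab a = 0)
    \<and> (\<forall>a b. m a b = m b a)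
    \<and> (\<forall>a. m a a = 0)
    \<and> (\<forall>a b. n < a \<longrightarrow> m a b = 0)
    \<and> (\<forall>a b c d. a < c \<and> c < b \<and> b < d \<and> d \<le> n \<longrightarrow> m a b = 0 \<or> m c d = 0)
    \<and> (\<forall>a\<le>n. (\<Sum>b\<le>n. m a b) = l (lab a))}"

definition arc_gcd :: "nat \<Rightarrow> arc_diagram \<Rightarrow> nat" where
  "arc_gcd n x = Gcd {snd x a b | a b. a < b \<and> b \<le> n}"

definition outside_order :: "nat \<Rightarrow> nat \<Rightarrow> nat \<Rightarrow> nat list" where
  "outside_order n p q = [q+1..<n+1] @ [0..<p]"

text \<open>The arcs crossing the chord, listed in order of their crossing points along the chord,
  starting from the end of the chord lying between positions q and q+1.\<close>
definition crossing_list :: "nat \<Rightarrow> nat \<Rightarrow> nat \<Rightarrow> (nat \<Rightarrow> nat \<Rightarrow> nat) \<Rightarrow> (nat \<times> nat) list" where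
  "crossing_list n p q m =
     concat (map (\<lambda>i. concat (map (\<lambda>j. replicate (m i j) (i, j)) (outside_order n p q)))
                 (rev [p..<q+1]))"

text \<open>After reflecting: the inside piece at crossing point k is moved to crossing point K+1-k
  and its inside endpoint i to p+q-i; the outside pieces stay.\<close>
definition new_crossing :: "nat \<Rightarrow> nat \<Rightarrow> nat \<Rightarrow> (nat \<Rightarrow> nat \<Rightarrow> nat) \<Rightarrow> (nat \<times> nat) list" where
  "new_crossing n p q m =
     (let L = crossing_list n p q m in
      zip (map (\<lambda>i. p + q - i) (rev (map fst L))) (map snd L))"

definition cactus_gen_act :: "nat \<Rightarrow> nat \<Rightarrow> nat \<Rightarrow> arc_diagram \<Rightarrow> arc_diagram" where
  "cactus_gen_act n p q x =
     (let lab = fst x; m = snd x;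
          ins = (\<lambda>a. p \<le> a \<and> a \<le> q);
          cnt = (\<lambda>a b. length (filter (\<lambda>e. e = (a, b)) (new_crossing n p q m)))
      in ((\<lambda>a. if ins a then lab (p + q - a) else lab a),
          (\<lambda>a b. if ins a \<and> ins b then m (p + q - a) (p + q - b)
                 else if ins a then cnt a b
                 else if ins b then cnt b a
                 else m a b)))"

text \<open>Elements of J_n are represented by words in the generators s_{p,q} (pairs (p,q));
  words act right to left.\<close>
definition cactus_word_act :: "nat \<Rightarrow> (nat \<times> nat) list \<Rightarrow> arc_diagram \<Rightarrow> arc_diagram" where
  "cactus_word_act n w x = foldr (\<lambda>(p, q) y. cactus_gen_act n p q y) w x"

end

(*
  Each arc count of s_{p,q} x is either an arc count of x (possibly at reflected positions) or
  the multiplicity of a pair in the list of arcs crossing the chord after the reflection. That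
  list is obtained from the list of arcs of x crossing the chord, where each pair (i, j) fills a
  block of length m_{i,j}(x), by reversing one component; so if g divides all m_{i,j}(x), both
  lists consist of blocks of length g and all multiplicities are multiples of g. Hence
  g(x) divides g(s_{p,q} x).

  Conversely, because x is non-crossing, the reflected crossings already come in the order in
  which the crossing list of s_{p,q} x enumerates them, so the crossing list of s_{p,q} x is
  exactly the reflected list of x. Reflecting twice is the identity, so s_{p,q} is an
  involution on arc counts and g(s_{p,q} x) divides g(s_{p,q} (s_{p,q} x)) = g(x). Symmetry
  and the non-crossing property are preserved by each generator, so induction on the word ends
  the proof.
*)
theory Submission
  imports Defs "HOL-Library.Multiset" "HOL-Library.Product_Lexorder"
begin

section \<open>Stretched lists and sorting by a key\<close>

definition stretch :: "nat \<Rightarrow> 'a list \<Rightarrow> 'a list" where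
  "stretch d xs = concat (map (replicate d) xs)"

lemma stretch_simps [simp]:
  "stretch d [] = []"
  "stretch d (x # xs) = replicate d x @ stretch d xs"
  by (simp_all add: stretch_def)

lemma stretch_append [simp]: "stretch d (xs @ ys) = stretch d xs @ stretch d ys"
  by (simp add: stretch_def)

lemma concat_map_stretch: "concat (map (stretch d) xss) = stretch d (concat xss)"
  by (induction xss) simp_all

lemma map_stretch: "map f (stretch d xs) = stretch d (map f xs)"
  by (induction xs) simp_all

lemma rev_stretch: "rev (stretch d xs) = stretch d (rev xs)"
  by (induction xs) simp_all

lemma filter_stretch: "filter P (stretch d xs) = stretch d (filter P xs)"
  by (induction xs) simp_all

lemma length_stretch: "length (stretch d xs) = d * length xs"
  by (induction xs) simp_all

lemma zip_stretch:
  "length xs = length ys \<Longrightarrow> zip (stretch d xs) (stretch d ys) = stretch d (zip xs ys)"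
  by (induction xs ys rule: list_induct2) (simp_all add: zip_append)

lemma replicate_mult_eq_stretch: "replicate (d * k) x = stretch d (replicate k x)"
  by (induction k) (simp_all add: replicate_add)

lemma dvd_count_list_stretch: "d dvd count_list (stretch d xs) x"
  by (simp add: count_list_eq_length_filter filter_stretch length_stretch)

lemma sorted_wrt_concat_replicate:
  assumes "sorted_wrt T E"
    and "\<And>e. e \<in> set E \<Longrightarrow> 0 < c e \<Longrightarrow> R e e"
    and "\<And>e e'. e \<in> set E \<Longrightarrow> e' \<in> set E \<Longrightarrow> T e e' \<Longrightarrow> 0 < c e \<Longrightarrow> 0 < c e'
      \<Longrightarrow> R e e'"
  shows "sorted_wrt R (concat (map (\<lambda>e. replicate (c e) e) E))"
  using assms
proof (induction E)
  case (Cons e E)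
  have "sorted_wrt R (replicate k e)" if "k = 0 \<or> R e e" for k
    using that by (induction k) auto
  then have "sorted_wrt R (replicate (c e) e)"
    using Cons.prems(2)[of e] by auto
  then show ?case
    using Cons by (simp add: sorted_wrt_append)
qed simp

lemma count_list_replicate: "count_list (replicate k y) x = (if y = x then k else 0)"
  by (induction k) auto

lemma count_list_concat_replicate:
  "distinct E \<Longrightarrow>
   count_list (concat (map (\<lambda>e. replicate (c e) e) E)) x = (if x \<in> set E then c x else 0)"
  by (induction E) (auto simp: count_list_replicate)

lemma concat_replicate_count_list_eq:
  fixes f :: "'a \<Rightarrow> 'b::linorder"
  assumes "distinct E" "inj_on f (set E)" "sorted (map f E)"
    and "set xs \<subseteq> set E" "sorted (map f xs)"
  shows "concat (map (\<lambda>e. replicate (count_list xs e) e) E) = xs"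
proof -
  let ?ys = "concat (map (\<lambda>e. replicate (count_list xs e) e) E)"
  have "mset ?ys = mset xs"
    using assms(1,4) by (auto simp: multiset_eq_iff count_mset count_list_concat_replicate
        count_list_0_iff)
  then have "mset (map f ?ys) = mset (map f xs)" by simp
  moreover have "sorted (map f ?ys)"
    unfolding sorted_map using assms(3)
    by (intro sorted_wrt_concat_replicate[where T = "\<lambda>e e'. f e \<le> f e'"]) (auto simp: sorted_map)
  ultimately have "map f ?ys = map f xs"
    using properties_for_sort[of "map f ?ys" "map f xs"] sorted_sort_id[OF assms(5)] by simp
  moreover have "inj_on f (set ?ys \<union> set xs)"
    using assms(4) by (auto intro: inj_on_subset[OF assms(2)])
  ultimately show ?thesis
    by (simp add: inj_on_map_eq_map)
qed

lemma sorted_if_sorted_fst_snd: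
  fixes zs :: "('a::linorder \<times> 'b::linorder) list"
  assumes "sorted (map fst zs)" "sorted (map snd zs)"
  shows "sorted zs"
  using assms
proof (induction zs)
  case (Cons z zs)
  have "z \<le> y" if "y \<in> set zs" for y
    using Cons.prems that unfolding less_eq_prod_def by (simp add: le_less)
  then show ?case using Cons by simp
qed simp

lemma sorted_map_le_if_less:
  assumes "sorted (map f xs)" "sorted (map g xs)" "x \<in> set xs" "y \<in> set xs" "f x < f y"
  shows "g x \<le> g y"
proof -
  obtain i j where ij: "i < length xs" "xs ! i = x" "j < length xs" "xs ! j = y"
    using assms(3,4) by (metis in_set_conv_nth)
  have "i < j"
  proof (rule ccontr)
    assume "\<not> i < j"
    then have "f y \<le> f x" using sorted_nth_mono[OF assms(1), of j i] ij by simp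
    then show False using assms(5) by simp
  qed
  then show ?thesis using sorted_nth_mono[OF assms(2), of i j] ij by simp
qed

section \<open>Arc counts\<close>

definition arcs_symmetric :: "(nat \<Rightarrow> nat \<Rightarrow> nat) \<Rightarrow> bool" where
  "arcs_symmetric m \<longleftrightarrow> (\<forall>a b. m a b = m b a)"

definition arcs_noncrossing :: "nat \<Rightarrow> (nat \<Rightarrow> nat \<Rightarrow> nat) \<Rightarrow> bool" where
  "arcs_noncrossing n m \<longleftrightarrow>
     (\<forall>a b c d. a < c \<and> c < b \<and> b < d \<and> d \<le> n \<longrightarrow> m a b = 0 \<or> m c d = 0)"

lemma arcs_symmetricD: "arcs_symmetric m \<Longrightarrow> m a b = m b a"
  by (simp add: arcs_symmetric_def)

lemma arcs_noncrossingD: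
  "arcs_noncrossing n m \<Longrightarrow> a < c \<Longrightarrow> c < b \<Longrightarrow> b < d \<Longrightarrow> d \<le> n
    \<Longrightarrow> m a b = 0 \<or> m c d = 0"
  by (simp add: arcs_noncrossing_def)

lemma arc_diagrams_noncrossing_symmetric:
  "x \<in> arc_diagrams n l \<Longrightarrow> arcs_noncrossing n (snd x) \<and> arcs_symmetric (snd x)"
  by (cases x) (simp add: arc_diagrams_def arcs_noncrossing_def arcs_symmetric_def)

lemma dvd_arc_gcd_iff:
  "d dvd arc_gcd n x \<longleftrightarrow> (\<forall>a b. a < b \<and> b \<le> n \<longrightarrow> d dvd snd x a b)"
  unfolding arc_gcd_def dvd_Gcd_iff by blast

lemma arc_gcd_dvd_arcs:
  assumes "arcs_symmetric (snd x)" "a \<le> n" "b \<le> n" "a \<noteq> b"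
  shows "arc_gcd n x dvd snd x a b"
proof -
  have "\<forall>a b. a < b \<and> b \<le> n \<longrightarrow> arc_gcd n x dvd snd x a b"
    using dvd_arc_gcd_iff[of "arc_gcd n x" n x] by simp
  then show ?thesis
    using assms arcs_symmetricD[OF assms(1), of a b] by (metis linorder_neq_iff)
qed

section \<open>A single generator\<close>

text \<open>Strictly increasing along \<^term>\<open>outside_order n p q\<close>, i.e. clockwise from q + 1.\<close>
definition outside_rank :: "nat \<Rightarrow> nat \<Rightarrow> nat \<Rightarrow> nat" where
  "outside_rank n q j = (if q < j then j else j + n + 1)"

locale cactus_generator =
  fixes n p q :: nat
  assumes bounds: "1 \<le> p" "p < q" "q \<le> n"
begin

abbreviation act :: "arc_diagram \<Rightarrow> arc_diagram" where
  "act \<equiv> cactus_gen_act n p q"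

abbreviation inside :: "nat \<Rightarrow> bool" where
  "inside a \<equiv> p \<le> a \<and> a \<le> q"

abbreviation reflect :: "nat \<Rightarrow> nat" where
  "reflect a \<equiv> p + q - a"

abbreviation outside :: "nat list" where
  "outside \<equiv> outside_order n p q"

abbreviation chord_pairs :: "(nat \<times> nat) list" where
  "chord_pairs \<equiv> List.product (rev [p..<q+1]) outside"

abbreviation crossings :: "(nat \<Rightarrow> nat \<Rightarrow> nat) \<Rightarrow> (nat \<times> nat) list" where
  "crossings m \<equiv> crossing_list n p q m"

abbreviation new_crossings :: "(nat \<Rightarrow> nat \<Rightarrow> nat) \<Rightarrow> (nat \<times> nat) list" where
  "new_crossings m \<equiv> new_crossing n p q m"

abbreviation rank :: "nat \<Rightarrow> nat" where
  "rank \<equiv> outside_rank n q"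

text \<open>Orders pairs as \<^term>\<open>crossing_list n p q m\<close> does: inside endpoint decreasing, then
  outside endpoint clockwise.\<close>
abbreviation chord_key :: "nat \<times> nat \<Rightarrow> nat \<times> nat" where
  "chord_key e \<equiv> (q - fst e, rank (snd e))"

lemma set_outside: "set outside = {j. j \<le> n \<and> (q < j \<or> j < p)}"
  using bounds by (auto simp: outside_order_def)

lemma distinct_outside: "distinct outside"
  using bounds by (auto simp: outside_order_def)

lemma mem_chord_pairs: "e \<in> set chord_pairs \<longleftrightarrow> inside (fst e) \<and> snd e \<in> set outside"
  by (cases e) auto

lemma distinct_chord_pairs: "distinct chord_pairs"
  using distinct_outside by (simp add: distinct_product)

lemma sorted_rank_outside: "sorted (map rank outside)"
proof -
  have after_q: "map rank [q+1..<n+1] = [q+1..<n+1]"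
    by (intro map_idI) (auto simp: outside_rank_def)
  have before_p: "map rank [0..<p] = map (\<lambda>j. j + (n + 1)) [0..<p]"
    using bounds by (intro map_cong) (auto simp: outside_rank_def)
  show ?thesis
    unfolding outside_order_def map_append after_q before_p sorted_append
    by (auto simp: sorted_map simp del: upt_Suc)
qed

lemma inj_on_rank: "inj_on rank {..n}"
  using bounds by (auto simp: inj_on_def outside_rank_def split: if_splits)

lemma sorted_chord_key: "sorted (map chord_key chord_pairs)"
proof -
  have sorted_product: "sorted (map chord_key (List.product L outside))"
    if "sorted_wrt (>) L" "\<forall>i\<in>set L. i \<le> q" for L
    using that
  proof (induction L)
    case (Cons i L)
    have "sorted (map chord_key (map (Pair i) outside))"
      using sorted_rank_outside by (simp add: sorted_map)
    moreover have "chord_key (i, j) \<le> chord_key (i', j')" if "i' \<in> set L" for i' j j'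
      using Cons.prems that by auto
    ultimately show ?case
      using Cons by (auto simp: sorted_append)
  qed simp
  have "sorted_wrt (>) (rev [p..<q+1])"
    using sorted_wrt_upt[of p "q+1"] by (simp only: sorted_wrt_rev)
  then show ?thesis
    by (rule sorted_product) auto
qed

lemma inj_on_chord_key: "inj_on chord_key (set chord_pairs)"
proof (rule inj_onI)
  fix e e' assume "e \<in> set chord_pairs" "e' \<in> set chord_pairs" "chord_key e = chord_key e'"
  then show "e = e'"
    using inj_on_rank set_outside by (auto simp: mem_chord_pairs inj_on_def prod_eq_iff)
qed

lemma crossing_list_eq:
  "crossings m = concat (map (\<lambda>e. replicate (m (fst e) (snd e)) e) chord_pairs)"
proof -
  have "concat (map (\<lambda>i. concat (map (\<lambda>j. replicate (m i j) (i, j)) outside)) L)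
        = concat (map (\<lambda>e. replicate (m (fst e) (snd e)) e) (List.product L outside))" for L
    by (induction L) (simp_all add: comp_def)
  then show ?thesis unfolding crossing_list_def by simp
qed

lemma mem_crossing_list:
  "e \<in> set (crossings m) \<longleftrightarrow> e \<in> set chord_pairs \<and> 0 < m (fst e) (snd e)"
  unfolding crossing_list_eq by auto

lemma count_list_crossing_list:
  assumes "e \<in> set chord_pairs"
  shows "count_list (crossings m) e = m (fst e) (snd e)"
  using assms
  by (simp only: crossing_list_eq count_list_concat_replicate[OF distinct_chord_pairs] if_True)

lemma new_crossing_eq:
  "new_crossings m = zip (map reflect (rev (map fst (crossings m)))) (map snd (crossings m))"
  unfolding new_crossing_def Let_def rev_map ..

lemma new_crossing_witnesses:
  assumes "(a, b) \<in> set (new_crossings m)"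
  shows "inside a \<and> b \<in> set outside \<and> (\<exists>i. inside i \<and> 0 < m i b)
    \<and> (\<exists>j\<in>set outside. 0 < m (reflect a) j)"
proof -
  obtain e where e: "e \<in> set (crossings m)" "a = reflect (fst e)"
    using set_zip_leftD[OF assms[unfolded new_crossing_eq]] by auto
  obtain e' where e': "e' \<in> set (crossings m)" "b = snd e'"
    using set_zip_rightD[OF assms[unfolded new_crossing_eq]] by auto
  show ?thesis
    using e e' by (auto simp: mem_crossing_list mem_chord_pairs)
qed

lemma set_new_crossing_subset: "set (new_crossings m) \<subseteq> set chord_pairs"
proof (rule subrelI)
  fix a b assume "(a, b) \<in> set (new_crossings m)"
  from new_crossing_witnesses[OF this] show "(a, b) \<in> set chord_pairs"
    by (intro mem_chord_pairs[THEN iffD2]) simp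
qed

lemma sorted_wrt_crossing_list:
  assumes "\<And>e. R e e"
    and "\<And>e e'. e \<in> set chord_pairs \<Longrightarrow> e' \<in> set chord_pairs \<Longrightarrow> chord_key e \<le> chord_key e'
      \<Longrightarrow> 0 < m (fst e) (snd e) \<Longrightarrow> 0 < m (fst e') (snd e') \<Longrightarrow> R e e'"
  shows "sorted_wrt R (crossings m)"
  unfolding crossing_list_eq
  by (rule sorted_wrt_concat_replicate[where T = "\<lambda>e e'. chord_key e \<le> chord_key e'"])
    (use assms sorted_chord_key in \<open>auto simp: sorted_map\<close>)

lemma sorted_wrt_fst_crossing_list: "sorted_wrt (\<lambda>e e'. fst e' \<le> fst e) (crossings m)"
  by (rule sorted_wrt_crossing_list) (auto simp: mem_chord_pairs)

lemma rank_le_if_noncrossing: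
  assumes noncrossing: "arcs_noncrossing n m" and symmetric: "arcs_symmetric m"
    and "inside i" "inside i'" "i' < i" "j \<in> set outside" "j' \<in> set outside"
    and "0 < m i j" "0 < m i' j'"
  shows "rank j \<le> rank j'"
proof (rule ccontr)
  assume "\<not> rank j \<le> rank j'"
  then consider "q < j'" "j' < j" | "j < p" "q < j'" | "j' < j" "j < p"
    using assms(6,7) by (auto simp: set_outside outside_rank_def split: if_splits)
  then show False
  proof cases
    case 1
    then show False
      using arcs_noncrossingD[OF noncrossing, of i' i j' j] assms by (auto simp: set_outside)
  next
    case 2
    then show False
      using arcs_noncrossingD[OF noncrossing, of j i' i j'] arcs_symmetricD[OF symmetric, of j i]
        assms by (auto simp: set_outside)
  next
    case 3
    then show False
      using arcs_noncrossingD[OF noncrossing, of j' j i' i] arcs_symmetricD[OF symmetric, of j' i']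
        arcs_symmetricD[OF symmetric, of j i] assms bounds by auto
  qed
qed

lemma sorted_rank_crossing_list:
  assumes "arcs_noncrossing n m" "arcs_symmetric m"
  shows "sorted (map (\<lambda>e. rank (snd e)) (crossings m))"
  unfolding sorted_map
proof (rule sorted_wrt_crossing_list)
  fix e e' :: "nat \<times> nat"
  assume "e \<in> set chord_pairs" "e' \<in> set chord_pairs" "chord_key e \<le> chord_key e'"
    and "0 < m (fst e) (snd e)" "0 < m (fst e') (snd e')"
  then show "rank (snd e) \<le> rank (snd e')"
    using rank_le_if_noncrossing[OF assms, of "fst e" "fst e'" "snd e" "snd e'"]
    by (cases "fst e = fst e'") (auto simp: mem_chord_pairs)
qed simp

lemma sorted_fst_new_crossing: "sorted (map (\<lambda>e. q - fst e) (new_crossings m))"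
proof -
  have fst_eq: "map fst (new_crossings m) = map reflect (rev (map fst (crossings m)))"
    by (simp add: new_crossing_eq)
  have "map (\<lambda>e. q - fst e) (new_crossings m) = map (\<lambda>a. q - a) (map fst (new_crossings m))"
    by simp
  also have "\<dots> = map (\<lambda>a. q - a) (map reflect (rev (map fst (crossings m))))"
    by (simp only: fst_eq)
  also have "\<dots> = rev (map (\<lambda>e. fst e - p) (crossings m))"
    unfolding rev_map map_map by (rule map_cong) (auto simp: mem_crossing_list mem_chord_pairs)
  finally have eq:
    "map (\<lambda>e. q - fst e) (new_crossings m) = rev (map (\<lambda>e. fst e - p) (crossings m))" .
  show ?thesis
    unfolding eq sorted_wrt_rev sorted_wrt_map
    by (rule sorted_wrt_mono_rel[OF _ sorted_wrt_fst_crossing_list]) (simp add: diff_le_mono)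
qed

lemma sorted_rank_new_crossing:
  assumes "arcs_noncrossing n m" "arcs_symmetric m"
  shows "sorted (map (\<lambda>e. rank (snd e)) (new_crossings m))"
proof -
  have "map snd (new_crossings m) = map snd (crossings m)"
    by (simp add: new_crossing_eq)
  moreover have "map (\<lambda>e. rank (snd e)) xs = map rank (map snd xs)" for xs :: "(nat \<times> nat) list"
    by simp
  ultimately show ?thesis
    using sorted_rank_crossing_list[OF assms] by (simp only:)
qed

lemma sorted_chord_key_new_crossing:
  assumes "arcs_noncrossing n m" "arcs_symmetric m"
  shows "sorted (map chord_key (new_crossings m))"
  by (rule sorted_if_sorted_fst_snd)
    (use sorted_fst_new_crossing sorted_rank_new_crossing[OF assms] in \<open>simp_all add: comp_def\<close>)

lemma rank_le_new_crossing:
  assumes "arcs_noncrossing n m" "arcs_symmetric m"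
    and "(a, b) \<in> set (new_crossings m)" "(c, d) \<in> set (new_crossings m)" "c < a"
  shows "rank b \<le> rank d"
proof -
  have "q - a < q - c"
    using new_crossing_witnesses[OF assms(3)] assms(5) by auto
  then show ?thesis
    using sorted_map_le_if_less[OF sorted_fst_new_crossing sorted_rank_new_crossing[OF assms(1,2)]
        assms(3,4)] by simp
qed

lemma action_arcs:
  "snd (act x) a b =
    (if inside a \<and> inside b then snd x (reflect a) (reflect b)
     else if inside a then count_list (new_crossings (snd x)) (a, b)
     else if inside b then count_list (new_crossings (snd x)) (b, a)
     else snd x a b)"
proof -
  have "length (filter (\<lambda>e. e = y) xs) = count_list xs y" for xs and y :: "nat \<times> nat"
    by (induction xs) auto
  then show ?thesis
    unfolding cactus_gen_act_def Let_def by auto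
qed

lemma action_arcs_inside:
  "inside a \<Longrightarrow> inside b \<Longrightarrow> snd (act x) a b = snd x (reflect a) (reflect b)"
  by (simp add: action_arcs)

lemma action_arcs_cut:
  "inside a \<Longrightarrow> \<not> inside b \<Longrightarrow> snd (act x) a b = count_list (new_crossings (snd x)) (a, b)"
  by (auto simp: action_arcs)

lemma action_arcs_outside: "\<not> inside a \<Longrightarrow> \<not> inside b \<Longrightarrow> snd (act x) a b = snd x a b"
  by (auto simp: action_arcs)

lemma cut_arc_mem_new_crossing:
  assumes "inside u" "\<not> inside v" "0 < snd (act x) u v \<or> 0 < snd (act x) v u"
  shows "(u, v) \<in> set (new_crossings (snd x))"
  using assms count_list_0_iff[of "new_crossings (snd x)" "(u, v)"] by (auto simp: action_arcs)

lemma symmetric_action: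
  assumes "arcs_symmetric (snd x)"
  shows "arcs_symmetric (snd (act x))"
  unfolding arcs_symmetric_def
proof (intro allI)
  fix a b
  show "snd (act x) a b = snd (act x) b a"
    using arcs_symmetricD[OF assms, of "reflect a" "reflect b"] arcs_symmetricD[OF assms, of a b]
    by (auto simp: action_arcs)
qed

lemma dvd_count_list_new_crossing:
  assumes "\<forall>e\<in>set chord_pairs. d dvd m (fst e) (snd e)"
  shows "d dvd count_list (new_crossings m) e"
proof -
  define ys where "ys = concat (map (\<lambda>e. replicate (m (fst e) (snd e) div d) e) chord_pairs)"
  have "crossings m = stretch d ys"
    unfolding crossing_list_eq ys_def concat_map_stretch[symmetric] map_map comp_def
  proof (intro arg_cong[where f = concat] map_cong refl)
    fix e assume "e \<in> set chord_pairs"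
    with assms have "d dvd m (fst e) (snd e)" by blast
    then show "replicate (m (fst e) (snd e)) e = stretch d (replicate (m (fst e) (snd e) div d) e)"
      by (simp add: replicate_mult_eq_stretch[symmetric])
  qed
  then have "new_crossings m = stretch d (zip (map reflect (rev (map fst ys))) (map snd ys))"
    by (simp add: new_crossing_eq map_stretch rev_stretch zip_stretch)
  then show ?thesis by (simp add: dvd_count_list_stretch)
qed

lemma arc_gcd_dvd_arc_gcd_action:
  assumes "arcs_symmetric (snd x)"
  shows "arc_gcd n x dvd arc_gcd n (act x)"
proof -
  have arcs: "arc_gcd n x dvd snd x a b" if "a \<le> n" "b \<le> n" "a \<noteq> b" for a b
    using arc_gcd_dvd_arcs[OF assms that] .
  have cut: "arc_gcd n x dvd count_list (new_crossings (snd x)) e" for e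
    using bounds
    by (intro dvd_count_list_new_crossing) (auto simp: mem_chord_pairs set_outside intro!: arcs)
  show ?thesis
    unfolding dvd_arc_gcd_iff using bounds by (auto simp: action_arcs cut intro!: arcs)
qed

lemma noncrossing_inner_outer:
  assumes "arcs_noncrossing n m" "arcs_symmetric m"
    and "inside s" "inside t" "s < v" "v < t" "j \<in> set outside" "0 < m s t" "0 < m v j"
  shows False
proof (cases "q < j")
  case True
  then show False
    using arcs_noncrossingD[OF assms(1), of s v t j] assms by (auto simp: set_outside)
next
  case False
  then show False
    using arcs_noncrossingD[OF assms(1), of j s v t] arcs_symmetricD[OF assms(2), of j v] assms bounds
    by (auto simp: set_outside)
qed

context
  fixes x :: arc_diagram
  assumes noncrossing: "arcs_noncrossing n (snd x)"
    and symmetric: "arcs_symmetric (snd x)"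
begin

lemma crossing_arcs_uncut:
  assumes "a < c" "c < b" "b < d" "d \<le> n" "0 < snd (act x) a b" "0 < snd (act x) c d"
    and "inside a = inside b" "inside c = inside d"
  shows False
proof (cases "inside a")
  case True
  then have "inside b" "inside c" "inside d" using assms by auto
  then have "0 < snd x (reflect a) (reflect b)" "0 < snd x (reflect d) (reflect c)"
    using True assms by (simp_all add: action_arcs_inside arcs_symmetricD[OF symmetric])
  moreover have "snd x (reflect d) (reflect c) = 0 \<or> snd x (reflect b) (reflect a) = 0"
    using True \<open>inside b\<close> \<open>inside c\<close> \<open>inside d\<close> assms bounds
    by (intro arcs_noncrossingD[OF noncrossing]) auto
  ultimately show False by (simp add: arcs_symmetricD[OF symmetric])
next
  case False
  then have "\<not> inside b" "\<not> inside c" "\<not> inside d" using assms by auto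
  then have "0 < snd x a b" "0 < snd x c d"
    using False assms by (simp_all add: action_arcs_outside)
  then show False using arcs_noncrossingD[OF noncrossing, of a c b d] assms by simp
qed

lemma crossing_arcs_cut_and_inner:
  assumes "a < c" "c < b" "b < d" "d \<le> n" "0 < snd (act x) a b" "0 < snd (act x) c d"
    and "inside a \<noteq> inside b \<and> inside c \<and> inside d
      \<or> inside a \<and> inside b \<and> inside c \<noteq> inside d"
  shows False
  using assms(7)
proof
  assume h: "inside a \<noteq> inside b \<and> inside c \<and> inside d"
  then have "\<not> inside a" "inside b" using assms by auto
  then have "(b, a) \<in> set (new_crossings (snd x))"
    using assms by (intro cut_arc_mem_new_crossing) auto
  then obtain j where "j \<in> set outside" "0 < snd x (reflect b) j"
    using new_crossing_witnesses by blast
  moreover have "0 < snd x (reflect d) (reflect c)"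
    using h assms by (simp add: action_arcs_inside arcs_symmetricD[OF symmetric])
  ultimately show False
    using h assms
    by (intro noncrossing_inner_outer[OF noncrossing symmetric, of "reflect d" "reflect c" _ j]) auto
next
  assume h: "inside a \<and> inside b \<and> inside c \<noteq> inside d"
  then have "inside c" "\<not> inside d" using assms by auto
  then have "(c, d) \<in> set (new_crossings (snd x))"
    using assms by (intro cut_arc_mem_new_crossing) auto
  then obtain j where "j \<in> set outside" "0 < snd x (reflect c) j"
    using new_crossing_witnesses by blast
  moreover have "0 < snd x (reflect b) (reflect a)"
    using h assms by (simp add: action_arcs_inside arcs_symmetricD[OF symmetric])
  ultimately show False
    using h assms
    by (intro noncrossing_inner_outer[OF noncrossing symmetric, of "reflect b" "reflect a" _ j]) auto
qed

lemma crossing_arcs_cut_and_outer: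
  assumes ord: "a < c" "c < b" "b < d" "d \<le> n"
    and pos: "0 < snd (act x) a b" "0 < snd (act x) c d"
    and "inside a \<noteq> inside b \<and> \<not> inside c \<and> \<not> inside d
      \<or> \<not> inside a \<and> \<not> inside b \<and> inside c \<noteq> inside d"
  shows False
proof -
  note crossing = arcs_noncrossingD[OF noncrossing]
  consider "inside a" "\<not> inside b" "\<not> inside c" "\<not> inside d"
    | "\<not> inside a" "inside b" "\<not> inside c" "\<not> inside d"
    | "\<not> inside a" "\<not> inside b" "inside c" "\<not> inside d"
    | "\<not> inside a" "\<not> inside b" "\<not> inside c" "inside d"
    using assms(7) by blast
  then show False
  proof cases
    case 1
    then have "(a, b) \<in> set (new_crossings (snd x))"
      using pos by (intro cut_arc_mem_new_crossing) auto
    then obtain e where "inside e" "0 < snd x e b" using new_crossing_witnesses by blast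
    moreover have "0 < snd x c d" using 1 pos by (simp add: action_arcs_outside)
    ultimately show False using crossing[of e c b d] 1 ord by auto
  next
    case 2
    then have "(b, a) \<in> set (new_crossings (snd x))"
      using pos by (intro cut_arc_mem_new_crossing) auto
    then obtain e where "inside e" "0 < snd x e a" using new_crossing_witnesses by blast
    moreover have "0 < snd x c d" using 2 pos by (simp add: action_arcs_outside)
    ultimately show False
      using crossing[of a c e d] arcs_symmetricD[OF symmetric, of a e] 2 ord by auto
  next
    case 3
    then have "(c, d) \<in> set (new_crossings (snd x))"
      using pos by (intro cut_arc_mem_new_crossing) auto
    then obtain e where "inside e" "0 < snd x e d" using new_crossing_witnesses by blast
    moreover have "0 < snd x a b" using 3 pos by (simp add: action_arcs_outside)
    ultimately show False using crossing[of a e b d] 3 ord by auto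
  next
    case 4
    then have "(d, c) \<in> set (new_crossings (snd x))"
      using pos by (intro cut_arc_mem_new_crossing) auto
    then obtain e where "inside e" "0 < snd x e c" using new_crossing_witnesses by blast
    moreover have "0 < snd x a b" using 4 pos by (simp add: action_arcs_outside)
    ultimately show False
      using crossing[of a c b e] arcs_symmetricD[OF symmetric, of c e] 4 ord bounds by auto
  qed
qed

lemma crossing_arcs_two_cuts:
  assumes ord: "a < c" "c < b" "b < d" "d \<le> n"
    and pos: "0 < snd (act x) a b" "0 < snd (act x) c d"
    and "inside a \<noteq> inside b" "inside c \<noteq> inside d"
  shows False
proof -
  note rank_le = rank_le_new_crossing[OF noncrossing symmetric]
  consider "inside a" "inside c" "\<not> inside b" "\<not> inside d"
    | "\<not> inside a" "\<not> inside c" "inside b" "inside d"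
    | "\<not> inside a" "inside c" "inside b" "\<not> inside d"
    using assms(7,8) ord by auto
  then show False
  proof cases
    case 1
    then have "(a, b) \<in> set (new_crossings (snd x))" "(c, d) \<in> set (new_crossings (snd x))"
      using pos by (auto intro: cut_arc_mem_new_crossing)
    then have "rank d \<le> rank b" using rank_le ord by blast
    then show False using 1 ord by (auto simp: outside_rank_def)
  next
    case 2
    then have "(b, a) \<in> set (new_crossings (snd x))" "(d, c) \<in> set (new_crossings (snd x))"
      using pos by (auto intro: cut_arc_mem_new_crossing)
    then have "rank c \<le> rank a" using rank_le ord by blast
    then show False using 2 ord by (auto simp: outside_rank_def)
  next
    case 3
    then have "(b, a) \<in> set (new_crossings (snd x))" "(c, d) \<in> set (new_crossings (snd x))"
      using pos by (auto intro: cut_arc_mem_new_crossing)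
    then have "rank a \<le> rank d" using rank_le ord by blast
    then show False using 3 ord by (auto simp: outside_rank_def)
  qed
qed

lemma noncrossing_action: "arcs_noncrossing n (snd (act x))"
  unfolding arcs_noncrossing_def
proof (intro allI impI)
  fix a b c d assume "a < c \<and> c < b \<and> b < d \<and> d \<le> n"
  then show "snd (act x) a b = 0 \<or> snd (act x) c d = 0"
    using crossing_arcs_uncut[of a c b d] crossing_arcs_cut_and_inner[of a c b d]
      crossing_arcs_cut_and_outer[of a c b d] crossing_arcs_two_cuts[of a c b d]
    by auto
qed

lemma crossing_list_action: "crossings (snd (act x)) = new_crossings (snd x)"
proof -
  have "crossings (snd (act x))
      = concat (map (\<lambda>e. replicate (count_list (new_crossings (snd x)) e) e) chord_pairs)"
    unfolding crossing_list_eq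
  proof (intro arg_cong[where f = concat] map_cong refl)
    fix e assume "e \<in> set chord_pairs"
    then have "inside (fst e)" "\<not> inside (snd e)"
      by (auto simp: mem_chord_pairs set_outside)
    then show "replicate (snd (act x) (fst e) (snd e)) e
        = replicate (count_list (new_crossings (snd x)) e) e"
      by (simp add: action_arcs_cut)
  qed
  also have "\<dots> = new_crossings (snd x)"
    by (rule concat_replicate_count_list_eq[OF distinct_chord_pairs inj_on_chord_key
          sorted_chord_key set_new_crossing_subset
          sorted_chord_key_new_crossing[OF noncrossing symmetric]])
  finally show ?thesis .
qed

lemma new_crossing_action: "new_crossings (snd (act x)) = crossings (snd x)"
proof -
  have "map (\<lambda>i. reflect (reflect i)) (map fst (crossings (snd x))) = map fst (crossings (snd x))"
    by (rule map_idI) (auto simp: mem_crossing_list mem_chord_pairs)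
  then have "map reflect (rev (map fst (new_crossings (snd x)))) = map fst (crossings (snd x))"
    by (simp add: new_crossing_eq[of "snd x"] rev_map)
  then show ?thesis
    by (simp add: new_crossing_eq[of "snd (act x)"] crossing_list_action zip_map_fst_snd
        new_crossing_eq[of "snd x"])
qed

lemma action_action_arcs:
  assumes "a \<le> n" "b \<le> n"
  shows "snd (act (act x)) a b = snd x a b"
proof -
  have cut: "snd (act (act x)) u v = snd x u v" if "inside u" "\<not> inside v" "v \<le> n" for u v
  proof -
    have "(u, v) \<in> set chord_pairs"
      using that by (intro mem_chord_pairs[THEN iffD2]) (auto simp: set_outside)
    then show ?thesis
      using that by (simp add: action_arcs_cut new_crossing_action count_list_crossing_list)
  qed
  show ?thesis
  proof (cases "inside a")
    case a: True
    show ?thesis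
    proof (cases "inside b")
      case True
      then have "inside (reflect a)" "inside (reflect b)" using a by auto
      then show ?thesis using a True by (simp add: action_arcs_inside)
    next
      case False
      then show ?thesis using a assms cut by blast
    qed
  next
    case a: False
    show ?thesis
    proof (cases "inside b")
      case True
      then show ?thesis
        using a assms cut[of b a] arcs_symmetricD[OF symmetric, of a b]
          arcs_symmetricD[OF symmetric_action[OF symmetric_action[OF symmetric]], of a b]
        by simp
    next
      case False
      then show ?thesis using a by (simp add: action_arcs_outside)
    qed
  qed
qed

lemma arc_gcd_action: "arc_gcd n (act x) = arc_gcd n x"
proof (rule dvd_antisym)
  show "arc_gcd n x dvd arc_gcd n (act x)"
    by (rule arc_gcd_dvd_arc_gcd_action[OF symmetric])
  have "arc_gcd n (act (act x)) = arc_gcd n x"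
    unfolding arc_gcd_def by (metis (lifting) action_action_arcs less_imp_le order.trans)
  moreover have "arc_gcd n (act x) dvd arc_gcd n (act (act x))"
    by (rule arc_gcd_dvd_arc_gcd_action[OF symmetric_action[OF symmetric]])
  ultimately show "arc_gcd n (act x) dvd arc_gcd n x" by simp
qed

end

end

section \<open>Words\<close>

lemma cactus_word_act_invariants:
  assumes "\<forall>(p, q) \<in> set w. 1 \<le> p \<and> p < q \<and> q \<le> n"
    and "arcs_noncrossing n (snd x)" "arcs_symmetric (snd x)"
  shows "arcs_noncrossing n (snd (cactus_word_act n w x))
    \<and> arcs_symmetric (snd (cactus_word_act n w x))
    \<and> arc_gcd n (cactus_word_act n w x) = arc_gcd n x"
  using assms(1)
proof (induction w)
  case Nil
  then show ?case using assms(2,3) by (simp add: cactus_word_act_def)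
next
  case (Cons pq w)
  obtain p q where pq: "pq = (p, q)" by (cases pq)
  then interpret cactus_generator n p q
    using Cons.prems by unfold_locales auto
  have "cactus_word_act n (pq # w) x = act (cactus_word_act n w x)"
    by (simp add: cactus_word_act_def pq)
  then show ?case
    using Cons noncrossing_action symmetric_action arc_gcd_action by simp
qed

theorem mainTheorem5:
  fixes n :: nat and l :: "nat \<Rightarrow> nat" and x :: arc_diagram and w :: "(nat \<times> nat) list"
  assumes "x \<in> arc_diagrams n l"
    and "\<forall>(p, q) \<in> set w. 1 \<le> p \<and> p < q \<and> q \<le> n"
  shows "arc_gcd n (cactus_word_act n w x) = arc_gcd n x"
  using cactus_word_act_invariants[OF assms(2)] arc_diagrams_noncrossing_symmetric[OF assms(1)]
  by blast

end
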